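(* An infinite binary overlap-free word $\mathbf{x}$ is $2$-automatic if and only if its code $(i_j)_{j\ge1}$ is ultimately periodic.
   Context: $\Sigma=\{0,1\}$. An overlap is a word $axaxa$ with $a\in\Sigma$, $x\in\Sigma^*$; a word is overlap-free if it has no overlap as a factor. $\mathcal{O}$ is the set of right-infinite binary overlap-free words, $\mu$ is the morphism $0\mapsto01$, $1\mapsto10$. Let $p_0=\epsilon$, $p_1=0$, $p_2=00$, $p_3=1$, $p_4=11$. The code of $\mathbf{x}\in\mathcal{O}$ is the unique sequence $(i_j)_{j\ge1}$ over $\{0,1,2,3,4\}$ for which there exist $\mathbf{y}_0=\mathbf{x},\mathbf{y}_1,\mathbf{y}_2,\ldots\in\mathcal{O}$ with $\mathbf{y}_{j-1}=p_{i_j}\mu(\mathbf{y}_j)$ for all $j\ge1$ (existence and uniqueness follow from the Restivo–Salemi factorization: each $\mathbf{x}\in\mathcal{O}$ is uniquely $p\mu(\mathbf{y})$ with $p\in\{p_0,\dots,p_4\}$, $\mathbf{y}\in\mathcal{O}$). An infinite word $(a_n)_{n\ge0}$ is $2$-automatic if there is a deterministic finite automaton with output which, on input the base-2 representation of $n$, outputs $a_n$ (equivalently, its $2$-kernel $\{(a_{2^e n+i})_{n\ge0}: e\ge0,0\le i<2^e\}$ is finite). *)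

theory Defs
  imports Main
begin

text \<open>Binary infinite words are functions nat => bool; the letter 0 is False, 1 is True.\<close>
type_synonym iword = "nat \<Rightarrow> bool"

text \<open>w contains an overlap axaxa (a a letter, x a finite word) as a factor starting at i,
  with p = |ax| >= 1: the factor w(i..i+2p) has period p.\<close>
definition has_overlap :: "iword \<Rightarrow> bool" where
  "has_overlap w \<longleftrightarrow> (\<exists>i p. p \<ge> 1 \<and> (\<forall>k\<le>p. w (i + k) = w (i + k + p)))"

definition overlap_free :: "iword \<Rightarrow> bool" where
  "overlap_free w \<longleftrightarrow> \<not> has_overlap w"

text \<open>The Thue--Morse morphism mu: 0 -> 01, 1 -> 10, applied to an infinite word.\<close>
definition mu :: "iword \<Rightarrow> iword" where
  "mu y n = (if even n then y (n div 2) else \<not> y (n div 2))"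

definition prepend :: "bool list \<Rightarrow> iword \<Rightarrow> iword" where
  "prepend u y n = (if n < length u then u ! n else y (n - length u))"

fun pref :: "nat \<Rightarrow> bool list" where
  "pref 0 = []"
| "pref (Suc 0) = [False]"
| "pref (Suc (Suc 0)) = [False, False]"
| "pref (Suc (Suc (Suc 0))) = [True]"
| "pref (Suc (Suc (Suc (Suc 0)))) = [True, True]"
| "pref _ = []"

text \<open>c is a code of x: c j (j >= 0) plays the role of i_(j+1), and y j the role of y_j.\<close>
definition is_code :: "iword \<Rightarrow> (nat \<Rightarrow> nat) \<Rightarrow> bool" where
  "is_code x c \<longleftrightarrow> (\<exists>y :: nat \<Rightarrow> iword. y 0 = x \<and>
      (\<forall>j. overlap_free (y j) \<and> c j \<in> {0..4} \<and> y j = prepend (pref (c j)) (mu (y (Suc j)))))"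

definition code :: "iword \<Rightarrow> (nat \<Rightarrow> nat)" where
  "code x = (THE c. is_code x c)"

definition ultimately_periodic :: "(nat \<Rightarrow> 'a) \<Rightarrow> bool" where
  "ultimately_periodic c \<longleftrightarrow> (\<exists>N p. p > 0 \<and> (\<forall>n\<ge>N. c (n + p) = c n))"

definition kernel2 :: "(nat \<Rightarrow> 'a) \<Rightarrow> (nat \<Rightarrow> 'a) set" where
  "kernel2 a = {(\<lambda>n. a (2 ^ e * n + i)) | e i. i < 2 ^ e}"

definition automatic2 :: "(nat \<Rightarrow> 'a) \<Rightarrow> bool" where
  "automatic2 a \<longleftrightarrow> finite (kernel2 a)"

end

theory Submission
  imports Defs
begin

text \<open>
  Every overlap-free word x factors uniquely as x = p mu(y) with p one of the
  five prefixes and y again overlap-free (Restivo--Salemi).  Iterating gives the chain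
  y_0 = x, y_1, y_2, ... and the code; the letters of y_j sit in x at the positions
  2^j n + s_j with an offset s_j < 2^(j+1).  Both directions of the theorem go through
  the finiteness of the set {y_j | j} of words in the chain:
  \<^item> if the 2-kernel of x is finite, each y_j is a shift by 0 or 1 of a kernel element,
    so the chain takes finitely many values; a repetition y_a = y_b with a < b forces the
    code to be periodic from a on, by uniqueness of the factorisation;
  \<^item> if the code is ultimately periodic, the words with a given purely periodic code are
    determined by their first letter, so the chain takes finitely many values; then the
    words u t(y_j) with |u| \<le> 3 and t an optional complementation form a finite set that
    contains x and is closed under the decimations w \<mapsto> (w(2n+b))_n, hence contains
    the whole 2-kernel.
\<close>

section \<open>Prepending and the Thue--Morse morphism\<close>

lemma prepend_lt: "n < length u \<Longrightarrow> prepend u y n = u ! n"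
  by (simp add: prepend_def)

lemma prepend_shift: "prepend u y (length u + n) = y n"
  by (simp add: prepend_def)

lemma prepend_Nil: "prepend [] y = y"
  by (rule ext) (simp add: prepend_def)

lemma prepend_prepend: "prepend u (prepend v y) = prepend (u @ v) y"
  by (rule ext) (auto simp: prepend_def nth_append)

lemma mu_even: "mu y (2 * n) = y n"
  by (simp add: mu_def)

lemma mu_odd: "mu y (Suc (2 * n)) = (\<not> y n)"
  by (simp add: mu_def)

lemma prepend_mu_pair:
  assumes "x = prepend p (mu y)"
  shows "x (length p + 2 * n) = y n" and "x (Suc (length p + 2 * n)) = (\<not> y n)"
  using assms prepend_shift[of p "mu y" "2 * n"] prepend_shift[of p "mu y" "Suc (2 * n)"]
  by (simp_all add: mu_even mu_odd)

lemma prepend_mu_first: "prepend p (mu w) 0 = (if p = [] then w 0 else hd p)"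
  by (cases p) (simp_all add: prepend_def mu_def)

lemma prepend_mu_alternates:
  assumes "x = prepend p (mu y)" "length p \<le> m" "even (m - length p)"
  shows "x m \<noteq> x (Suc m)"
proof -
  obtain n where "m = length p + 2 * n"
    using assms(2,3) by (metis evenE le_add_diff_inverse)
  then show ?thesis using prepend_mu_pair[OF assms(1)] by simp
qed

lemma desubstitute:
  assumes alt: "\<And>n. x (s + 2 * n) \<noteq> x (Suc (s + 2 * n))"
  shows "x = prepend (map x [0..<s]) (mu (\<lambda>n. x (s + 2 * n)))"
proof (rule ext)
  fix m
  show "x m = prepend (map x [0..<s]) (mu (\<lambda>n. x (s + 2 * n))) m"
  proof (cases "m < s")
    case True
    then show ?thesis by (simp add: prepend_def)
  next
    case False
    then have pm: "prepend (map x [0..<s]) (mu (\<lambda>n. x (s + 2 * n))) m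
        = mu (\<lambda>n. x (s + 2 * n)) (m - s)" by (simp add: prepend_def)
    define n where "n = (m - s) div 2"
    have "m - s = 2 * n \<or> m - s = Suc (2 * n)" unfolding n_def by presburger
    then consider "m = s + 2 * n" "m - s = 2 * n" | "m = Suc (s + 2 * n)" "m - s = Suc (2 * n)"
      using False by arith
    then show ?thesis using alt[of n] unfolding pm by cases (simp_all add: mu_even mu_odd)
  qed
qed

lemma pref_length: "length (pref k) \<le> 2"
  by (cases k rule: pref.cases) auto

lemma pref_values:
  "pref 0 = []" "pref 1 = [False]" "pref 2 = [False, False]" "pref 3 = [True]" "pref 4 = [True, True]"
  by (simp_all add: numeral_eq_Suc)

lemma pref_length_two: "length (pref k) = 2 \<Longrightarrow> \<exists>b. pref k = [b, b]"
  by (cases k rule: pref.cases) auto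

lemma pref_realises:
  assumes "u = [] \<or> u = [b] \<or> u = [b, b]"
  shows "\<exists>k\<in>{0..4::nat}. pref k = u"
proof -
  from assms consider "u = []" | "u = [b]" | "u = [b, b]" by blast
  then show ?thesis
  proof cases
    case 1
    then show ?thesis by (intro bexI[of _ 0]) (simp_all add: pref_values)
  next
    case 2
    then show ?thesis by (intro bexI[of _ "if b then 3 else 1"]) (simp_all add: pref_values)
  next
    case 3
    then show ?thesis by (intro bexI[of _ "if b then 4 else 2"]) (simp_all add: pref_values)
  qed
qed

lemma pref_inj_on: "a \<in> {0..4} \<Longrightarrow> b \<in> {0..4} \<Longrightarrow> pref a = pref b \<Longrightarrow> a = (b::nat)"
proof -
  assume ab: "a \<in> {0..4}" "b \<in> {0..4}" "pref a = pref b"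
  then have "a = 0 \<or> a = 1 \<or> a = 2 \<or> a = 3 \<or> a = 4" "b = 0 \<or> b = 1 \<or> b = 2 \<or> b = 3 \<or> b = 4"
    by auto
  with ab show ?thesis by (auto simp: pref_values)
qed

section \<open>Overlaps\<close>

lemma overlap_at: "p \<ge> 1 \<Longrightarrow> (\<And>k. k \<le> p \<Longrightarrow> w (i + k) = w (i + k + p)) \<Longrightarrow> \<not> overlap_free w"
  unfolding overlap_free_def has_overlap_def by blast

text \<open>The three short overlaps used below: aaa, ababa and baabaab (period 3); the last one
  arises when two equal pairs aa, bb sit at distance 3 inside an overlap-free word.\<close>
lemma aaa_overlap: "w i = w (i + 1) \<Longrightarrow> w (i + 1) = w (i + 2) \<Longrightarrow> \<not> overlap_free w"
  by (rule overlap_at[of 1 w i]) (auto simp: le_Suc_eq)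

lemma alternating_overlap:
  assumes alt: "\<And>k. k < 4 \<Longrightarrow> w (i + k) \<noteq> w (Suc (i + k))"
  shows "\<not> overlap_free w"
proof (rule overlap_at[of 2 w i])
  fix k :: nat assume "k \<le> 2"
  then have "w (i + k) \<noteq> w (Suc (i + k))" "w (Suc (i + k)) \<noteq> w (Suc (Suc (i + k)))"
    using alt[of k] alt[of "Suc k"] by simp_all
  then show "w (i + k) = w (i + k + 2)" by simp
qed simp

lemma gap_three_overlap:
  assumes "1 \<le> i" "w i = w (i + 1)" "w (i + 1) \<noteq> w (i + 2)" "w (i + 2) \<noteq> w (i + 3)"
    and "w (i + 3) = w (i + 4)" and of: "overlap_free w"
  shows False
proof -
  obtain h where i: "i = Suc h" using assms(1) by (cases i) auto
  have "w h \<noteq> w i" using aaa_overlap[of w h] assms(2) of i by auto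
  moreover have "w (i + 5) \<noteq> w (i + 4)"
    using aaa_overlap[of w "i + 3"] assms(5) of by (auto simp: eval_nat_numeral)
  ultimately have "\<forall>k\<le>3. w (h + k) = w (h + k + 3)"
    using assms(2-5) i by (auto simp: le_Suc_eq eval_nat_numeral)
  then show False using overlap_at[of 3 w h] of by auto
qed

text \<open>In an overlap-free word, two equal adjacent letters at positions \<ge> 1 lie an even
  distance apart.  Otherwise take a closest such odd pair: between them the word
  alternates, and each possible gap (1, 3 or at least 5) yields one of the overlaps above.\<close>
lemma equal_pairs_even_distance:
  assumes of: "overlap_free x"
  shows "1 \<le> i \<Longrightarrow> i < j \<Longrightarrow> x i = x (Suc i) \<Longrightarrow> x j = x (Suc j) \<Longrightarrow> even (j - i)"
proof (induction "j - i" arbitrary: i j rule: less_induct)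
  case less
  show ?case
  proof (rule ccontr)
    assume odd: "odd (j - i)"
    show False
    proof (cases "\<exists>k. i < k \<and> k < j \<and> x k = x (Suc k)")
      case True
      then obtain k where k: "i < k" "k < j" "x k = x (Suc k)" by blast
      have "even (k - i)" "even (j - k)"
        using less.hyps[of k i] less.hyps[of j k] less.prems k by auto
      with odd k show False by presburger
    next
      case False
      then have alt: "\<And>m. i < m \<Longrightarrow> m < j \<Longrightarrow> x m \<noteq> x (Suc m)" by blast
      have "j - i = 1 \<or> j - i = 3 \<or> 5 \<le> j - i" using odd by presburger
      then consider "j = i + 1" | "j = i + 3" | "i + 5 \<le> j" using less.prems(2) by linarith
      then show False
      proof cases
        case 1
        then show False using aaa_overlap[of x i] of less.prems by simp
      next
        case 2
        then show False
          using gap_three_overlap[OF less.prems(1) _ _ _ _ of] alt[of "i + 1"] alt[of "i + 2"] less.prems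
          by (simp add: eval_nat_numeral)
      next
        case 3
        have "x (i + 1 + k) \<noteq> x (Suc (i + 1 + k))" if "k < 4" for k
          by (rule alt) (use 3 that in simp_all)
        then show False using alternating_overlap of by blast
      qed
    qed
  qed
qed

text \<open>Overlap-freeness passes from p mu(y) to y, since mu doubles overlaps.\<close>
lemma overlap_free_mu_preimage:
  assumes of: "overlap_free (prepend p (mu y))"
  shows "overlap_free y"
proof (rule ccontr)
  assume "\<not> overlap_free y"
  then obtain i q where q: "q \<ge> 1" "\<forall>k\<le>q. y (i + k) = y (i + k + q)"
    unfolding overlap_free_def has_overlap_def by blast
  have "mu y (2 * i + k) = mu y (2 * i + k + 2 * q)" if "k \<le> 2 * q" for k
  proof -
    have "y (i + k div 2) = y (i + k div 2 + q)" using q(2) that by simp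
    moreover have "(2 * i + k + 2 * q) div 2 = i + k div 2 + q" "(2 * i + k) div 2 = i + k div 2"
      by simp_all
    ultimately show ?thesis unfolding mu_def by (simp add: ac_simps)
  qed
  then have "\<And>k. k \<le> 2 * q \<Longrightarrow> prepend p (mu y) (length p + 2 * i + k)
      = prepend p (mu y) (length p + 2 * i + k + 2 * q)"
    by (metis add.assoc prepend_shift)
  then show False using overlap_at[of "2 * q"] of q(1) by auto
qed

section \<open>The Restivo--Salemi factorisation\<close>

text \<open>An overlap-free word alternates in pairs from a start s \<le> 2, where s = 2 only if
  the first two letters agree: the equal adjacent pairs beyond position 0 all have the
  same parity by the previous lemma.\<close>
lemma alternation_start:
  assumes of: "overlap_free x"
  obtains s where "s = 0 \<or> s = 1 \<or> (s = 2 \<and> x 0 = x 1)"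
    and "\<And>n. x (s + 2 * n) \<noteq> x (Suc (s + 2 * n))"
proof (cases "\<exists>i. 1 \<le> i \<and> odd i \<and> x i = x (Suc i)")
  case True
  then obtain i where i: "1 \<le> i" "odd i" "x i = x (Suc i)" by blast
  have even_alt: "x m \<noteq> x (Suc m)" if "2 \<le> m" "even m" for m
  proof
    assume "x m = x (Suc m)"
    then have "even (i - m)" if "m < i" using equal_pairs_even_distance[OF of, of m i] that \<open>2 \<le> m\<close> i
      by auto
    moreover have "even (m - i)" if "i < m"
      using equal_pairs_even_distance[OF of, of i m] that i \<open>x m = x (Suc m)\<close> by auto
    ultimately show False using i \<open>even m\<close> by (cases "m < i"; cases "i < m") auto
  qed
  show ?thesis
  proof (cases "x 0 = x 1")
    case True
    then show ?thesis using that[of 2] even_alt by simp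
  next
    case False
    have "x (2 * n) \<noteq> x (Suc (2 * n))" for n
      using False even_alt[of "2 * n"] by (cases n) auto
    then show ?thesis using that[of 0] by simp
  qed
next
  case False
  have "x (1 + 2 * n) \<noteq> x (Suc (1 + 2 * n))" for n
  proof -
    have "1 \<le> 1 + 2 * n" "odd (1 + 2 * n)" by simp_all
    then show ?thesis using False by blast
  qed
  then show ?thesis using that[of 1] by blast
qed

text \<open>Existence of the factorisation: undo mu from the alternation start on.\<close>
lemma factorisation_exists:
  assumes of: "overlap_free x"
  shows "\<exists>a y. a \<in> {0..4} \<and> overlap_free y \<and> x = prepend (pref a) (mu y)"
proof -
  obtain s where s: "s = 0 \<or> s = 1 \<or> (s = 2 \<and> x 0 = x 1)"
    and alt: "\<And>n. x (s + 2 * n) \<noteq> x (Suc (s + 2 * n))"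
    using alternation_start[OF of] by auto
  have "map x [0..<s] = [] \<or> map x [0..<s] = [x 0] \<or> map x [0..<s] = [x 0, x 0]"
    using s by (auto simp: numeral_2_eq_2)
  then have "\<exists>a\<in>{0..4}. pref a = map x [0..<s]" by (rule pref_realises)
  then obtain a where a: "a \<in> {0..4}" "pref a = map x [0..<s]" ..
  define y where "y = (\<lambda>n. x (s + 2 * n))"
  have x: "x = prepend (pref a) (mu y)"
    unfolding a(2) y_def by (rule desubstitute[OF alt])
  then have "overlap_free (prepend (pref a) (mu y))" using of by simp
  then have "overlap_free y" by (rule overlap_free_mu_preimage)
  with x a(1) show ?thesis by blast
qed

text \<open>Two factorisations of an overlap-free word have prefixes of the same parity: otherwise
  the word would alternate at every position \<ge> 2, an ababa overlap.\<close>
lemma factorisation_parity: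
  assumes of: "overlap_free x"
    and xa: "x = prepend (pref a) (mu z)" and xb: "x = prepend (pref b) (mu z')"
  shows "even (length (pref a) + length (pref b))"
proof (rule ccontr)
  assume odd: "odd (length (pref a) + length (pref b))"
  have ne: "x m \<noteq> x (Suc m)" if "2 \<le> m" for m
  proof -
    have la: "length (pref a) \<le> m" and lb: "length (pref b) \<le> m"
      using pref_length[of a] pref_length[of b] that by linarith+
    show ?thesis
    proof (cases "even (m - length (pref a))")
      case True
      then show ?thesis by (rule prepend_mu_alternates[OF xa la])
    next
      case False
      then have "even (m - length (pref b))" using odd la lb by presburger
      then show ?thesis by (rule prepend_mu_alternates[OF xb lb])
    qed
  qed
  have "x (2 + k) \<noteq> x (Suc (2 + k))" for k by (rule ne) simp
  then show False using alternating_overlap of by blast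
qed

text \<open>Uniqueness of the factorisation: prefix lengths 0 and 2 cannot both occur, since one
  factorisation makes the first two letters differ and the other makes them equal; equal
  prefix lengths force equal prefixes and, reading off the even positions, equal y.\<close>
lemma factorisation_unique:
  assumes of: "overlap_free x" and ab: "a \<in> {0..4}" "b \<in> {0..4}"
    and xa: "x = prepend (pref a) (mu z)" and xb: "x = prepend (pref b) (mu z')"
  shows "a = b \<and> z = z'"
proof -
  let ?la = "length (pref a)" and ?lb = "length (pref b)"
  have "?la = ?lb"
  proof (rule ccontr)
    assume "?la \<noteq> ?lb"
    then have "(?la = 0 \<and> ?lb = 2) \<or> (?la = 2 \<and> ?lb = 0)"
      using factorisation_parity[OF of xa xb] pref_length[of a] pref_length[of b] by presburger
    then show False
    proof
      assume "?la = 0 \<and> ?lb = 2"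
      moreover from this obtain c where "pref b = [c, c]" using pref_length_two by blast
      ultimately show False
        using prepend_mu_alternates[OF xa, of 0] xb by (simp add: prepend_def)
    next
      assume "?la = 2 \<and> ?lb = 0"
      moreover from this obtain c where "pref a = [c, c]" using pref_length_two by blast
      ultimately show False
        using prepend_mu_alternates[OF xb, of 0] xa by (simp add: prepend_def)
    qed
  qed
  moreover have "pref a ! n = pref b ! n" if "n < ?la" for n
    using that \<open>?la = ?lb\<close> xa xb prepend_lt by metis
  ultimately have "pref a = pref b" by (simp add: nth_equalityI)
  then have "a = b" using pref_inj_on ab by blast
  moreover have "z n = z' n" for n
    using prepend_mu_pair(1)[OF xa, of n] prepend_mu_pair(1)[OF xb, of n] \<open>?la = ?lb\<close> by simp
  ultimately show ?thesis by auto
qed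

section \<open>The chain of an overlap-free word\<close>

definition factor_chain :: "iword \<Rightarrow> (nat \<Rightarrow> nat) \<Rightarrow> (nat \<Rightarrow> iword) \<Rightarrow> bool" where
  "factor_chain x c y \<longleftrightarrow> y 0 = x \<and>
     (\<forall>j. overlap_free (y j) \<and> c j \<in> {0..4} \<and> y j = prepend (pref (c j)) (mu (y (Suc j))))"

lemma is_code_iff_chain: "is_code x c \<longleftrightarrow> (\<exists>y. factor_chain x c y)"
  unfolding is_code_def factor_chain_def by blast

lemma chain_start: "factor_chain x c y \<Longrightarrow> y 0 = x"
  unfolding factor_chain_def by blast

lemma chain_step:
  assumes "factor_chain x c y"
  shows "overlap_free (y j)" "c j \<in> {0..4}" "y j = prepend (pref (c j)) (mu (y (Suc j)))"
  using assms unfolding factor_chain_def by blast+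

text \<open>By uniqueness of the factorisation, a word has at most one chain.\<close>
lemma chain_unique:
  assumes ch: "factor_chain x c y" and ch': "factor_chain x c' y'"
  shows "c = c' \<and> y = y'"
proof -
  have step: "c j = c' j \<and> y (Suc j) = y' (Suc j)" if "y j = y' j" for j
  proof -
    have "y j = prepend (pref (c' j)) (mu (y' (Suc j)))"
      unfolding that by (rule chain_step(3)[OF ch'])
    then show ?thesis
      using factorisation_unique[OF chain_step(1,2)[OF ch] chain_step(2)[OF ch'] chain_step(3)[OF ch]]
      by blast
  qed
  have y: "y j = y' j" for j
  proof (induction j)
    case 0
    then show ?case using chain_start[OF ch] chain_start[OF ch'] by simp
  next
    case (Suc j)
    then show ?case using step by blast
  qed
  then show ?thesis using step by auto
qed

text \<open>Existence: iterate a choice of Restivo--Salemi factorisation.\<close>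
lemma chain_exists:
  assumes of: "overlap_free x"
  shows "\<exists>c y. factor_chain x c y"
proof -
  have "\<forall>z. \<exists>ay. overlap_free z \<longrightarrow>
      fst ay \<in> {0..4} \<and> overlap_free (snd ay) \<and> z = prepend (pref (fst ay)) (mu (snd ay))"
  proof
    fix z
    show "\<exists>ay. overlap_free z \<longrightarrow>
      fst ay \<in> {0..4} \<and> overlap_free (snd ay) \<and> z = prepend (pref (fst ay)) (mu (snd ay))"
    proof (cases "overlap_free z")
      case True
      then obtain a w where "a \<in> {0..4}" "overlap_free w" "z = prepend (pref a) (mu w)"
        using factorisation_exists by blast
      then show ?thesis by (intro exI[of _ "(a, w)"]) simp
    qed simp
  qed
  from choice[OF this] obtain F :: "iword \<Rightarrow> nat \<times> iword" where F: "\<And>z. overlap_free z \<Longrightarrow>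
      fst (F z) \<in> {0..4} \<and> overlap_free (snd (F z)) \<and> z = prepend (pref (fst (F z))) (mu (snd (F z)))"
    by blast
  define y where "y j = ((snd \<circ> F) ^^ j) x" for j
  have y_Suc: "y (Suc j) = snd (F (y j))" for j by (simp add: y_def)
  have of_y: "overlap_free (y j)" for j
  proof (induction j)
    case 0
    then show ?case using of by (simp add: y_def)
  next
    case (Suc j)
    then show ?case using F[OF Suc] unfolding y_Suc by blast
  qed
  have "fst (F (y j)) \<in> {0..4}" "y j = prepend (pref (fst (F (y j)))) (mu (y (Suc j)))" for j
    using F[OF of_y[of j]] unfolding y_Suc by blast+
  moreover have "y 0 = x" by (simp add: y_def)
  ultimately have "factor_chain x (\<lambda>j. fst (F (y j))) y"
    unfolding factor_chain_def using of_y by blast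
  then show ?thesis by blast
qed

lemma code_chain:
  assumes "overlap_free x"
  obtains y where "factor_chain x (code x) y"
proof -
  obtain c y where ch: "factor_chain x c y" using chain_exists[OF assms] by blast
  have "\<exists>!c. is_code x c"
    using ch chain_unique unfolding is_code_iff_chain by metis
  then have "is_code x (code x)" unfolding code_def by (rule theI')
  then show ?thesis using that unfolding is_code_iff_chain by blast
qed

lemma chain_shift:
  assumes "factor_chain x c y"
  shows "factor_chain (y j) (\<lambda>n. c (j + n)) (\<lambda>n. y (j + n))"
  unfolding factor_chain_def add_Suc_right add_0_right using chain_step[OF assms] by blast

text \<open>The offset s_j at which y_j is read off from x: y_j(n) = x(2^j n + s_j).\<close>
fun offset :: "(nat \<Rightarrow> nat) \<Rightarrow> nat \<Rightarrow> nat" where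
  "offset c 0 = 0"
| "offset c (Suc j) = offset c j + 2 ^ j * length (pref (c j))"

lemma chain_positions:
  assumes ch: "factor_chain x c y"
  shows "y j n = x (2 ^ j * n + offset c j)"
proof (induction j arbitrary: n)
  case 0
  then show ?case using chain_start[OF ch] by simp
next
  case (Suc j)
  have "y (Suc j) n = y j (length (pref (c j)) + 2 * n)"
    by (rule prepend_mu_pair(1)[OF chain_step(3)[OF ch], symmetric])
  also have "\<dots> = x (2 ^ j * (length (pref (c j)) + 2 * n) + offset c j)" by (rule Suc.IH)
  also have "\<dots> = x (2 ^ Suc j * n + offset c (Suc j))" by (simp add: algebra_simps)
  finally show ?case .
qed

text \<open>Each prefix has length at most 2, so s_j \<le> 2 (2^j - 1).\<close>
lemma offset_bound: "offset c j + 2 \<le> 2 ^ Suc j"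
proof (induction j)
  case 0
  then show ?case by simp
next
  case (Suc j)
  have "2 ^ j * length (pref (c j)) \<le> 2 ^ Suc j"
    using mult_le_mono2[OF pref_length[of "c j"], of "2 ^ j"] by (simp add: mult.commute)
  moreover have "2 ^ Suc (Suc j) = 2 ^ Suc j + (2 :: nat) ^ Suc j" by simp
  ultimately show ?case using Suc.IH unfolding offset.simps by linarith
qed

section \<open>From a finite 2-kernel to an ultimately periodic code\<close>

text \<open>Each y_j is a kernel element (\<open>x(2^j n + r)\<close> with r < 2^j) shifted by 0 or 1,
  because its offset is below 2^(j+1).\<close>
lemma chain_in_shifted_kernel:
  assumes ch: "factor_chain x c y"
  shows "y j \<in> (\<lambda>(k, q) n. k (n + q)) ` (kernel2 x \<times> {0..<2::nat})"
proof -
  define r where "r = offset c j mod 2 ^ j"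
  define q where "q = offset c j div 2 ^ j"
  have "r < 2 ^ j" unfolding r_def by simp
  then have "(\<lambda>n. x (2 ^ j * n + r)) \<in> kernel2 x" unfolding kernel2_def by blast
  moreover have "q < 2"
    using offset_bound[of c j] unfolding q_def by (simp add: less_mult_imp_div_less)
  moreover have "y j = (\<lambda>n. x (2 ^ j * (n + q) + r))"
  proof
    fix n
    have "2 ^ j * (n + q) + r = 2 ^ j * n + offset c j"
      unfolding q_def r_def by (simp add: algebra_simps)
    then show "y j n = x (2 ^ j * (n + q) + r)" by (simp add: chain_positions[OF ch])
  qed
  ultimately show ?thesis by force
qed

lemma chain_range_finite_if_automatic:
  assumes ch: "factor_chain x c y" and au: "automatic2 x"
  shows "finite (range y)"
proof (rule finite_subset)
  show "range y \<subseteq> (\<lambda>(k, q) n. k (n + q)) ` (kernel2 x \<times> {0..<2::nat})"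
    using chain_in_shifted_kernel[OF ch] by blast
  show "finite ((\<lambda>(k, q) n. k (n + q)) ` (kernel2 x \<times> {0..<2::nat}))"
    using au unfolding automatic2_def by simp
qed

text \<open>A repetition y_a = y_b (a < b) in a chain makes the code periodic from a on with
  period b - a, since both tails are the unique chain of the same word.\<close>
lemma periodic_code_if_chain_range_finite:
  assumes ch: "factor_chain x c y" and fin: "finite (range y)"
  shows "ultimately_periodic c"
proof -
  have "\<not> inj y" using fin finite_imageD infinite_UNIV_nat by blast
  then obtain a b where "a \<noteq> b" "y a = y b" unfolding inj_def by blast
  then obtain a b where ab: "a < b" "y a = y b" by (metis linorder_neqE_nat)
  have "(\<lambda>n. c (a + n)) = (\<lambda>n. c (b + n))"
    using chain_unique[OF chain_shift[OF ch, of a]] chain_shift[OF ch, of b] ab(2) by metis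
  then have tail: "c (a + m) = c (b + m)" for m by metis
  have "c (n + (b - a)) = c n" if "a \<le> n" for n
    using tail[of "n - a"] that ab(1) by (simp add: add.commute)
  with ab(1) show ?thesis unfolding ultimately_periodic_def by (metis zero_less_diff)
qed

section \<open>From an ultimately periodic code to a finite chain\<close>

lemma periodic_multiple:
  fixes d :: "nat \<Rightarrow> 'a"
  assumes per: "\<And>n. N \<le> n \<Longrightarrow> d (n + P) = d n" and "N \<le> n"
  shows "d (n + k * P) = d n"
proof (induction k)
  case 0
  then show ?case by simp
next
  case (Suc k)
  have "d (n + Suc k * P) = d ((n + k * P) + P)" by (simp add: algebra_simps)
  also have "\<dots> = d (n + k * P)" using per \<open>N \<le> n\<close> by simp
  finally show ?case using Suc.IH by simp
qed

lemma chain_first_letter: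
  assumes ch: "factor_chain x c y" and "pref (c j) \<noteq> []"
  shows "y j 0 = hd (pref (c j))"
  using prepend_mu_first[of "pref (c j)" "y (Suc j)"] chain_step(3)[OF ch, of j] assms(2) by simp

lemma chain_first_letter_empty_run:
  assumes ch: "factor_chain x c y" and empty: "\<And>i. i < t \<Longrightarrow> pref (c (j + i)) = []"
  shows "y j 0 = y (j + t) 0"
  using empty
proof (induction t)
  case 0
  then show ?case by simp
next
  case (Suc t)
  have "y (j + t) 0 = y (Suc (j + t)) 0"
    using prepend_mu_first[of "pref (c (j + t))" "y (Suc (j + t))"] chain_step(3)[OF ch, of "j + t"]
      Suc.prems[of t] by simp
  then show ?case using Suc by simp
qed

text \<open>For a purely periodic code, the first letters of the whole chain are determined by the
  first letter of the word: follow empty prefixes to the next nonempty one, and if there is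
  none then all prefixes are empty by periodicity.\<close>
lemma chain_first_letters_agree:
  assumes ch: "factor_chain z d y" and ch': "factor_chain z' d y'"
    and P: "P > 0" and per: "\<And>n. d (n + P) = d n" and first: "z 0 = z' 0"
  shows "y j 0 = y' j 0"
proof (cases "\<exists>t. pref (d (j + t)) \<noteq> []")
  case True
  define t where "t = (LEAST t. pref (d (j + t)) \<noteq> [])"
  have t: "pref (d (j + t)) \<noteq> []" unfolding t_def using True by (rule LeastI_ex)
  have empty: "pref (d (j + i)) = []" if "i < t" for i
    using not_less_Least[of i "\<lambda>t. pref (d (j + t)) \<noteq> []"] that unfolding t_def by blast
  show ?thesis
    using chain_first_letter_empty_run[OF ch empty] chain_first_letter_empty_run[OF ch' empty]
      chain_first_letter[OF ch t] chain_first_letter[OF ch' t] by simp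
next
  case False
  have "pref (d i) = []" for i
  proof -
    have "d i = d (j + (i + j * P - j))"
      using periodic_multiple[of 0 d P i j] per P by (simp add: le_add2[of j] trans_le_add2)
    then show ?thesis using False by metis
  qed
  then show ?thesis
    using chain_first_letter_empty_run[OF ch, of j 0] chain_first_letter_empty_run[OF ch', of j 0]
      chain_start[OF ch] chain_start[OF ch'] first by simp
qed

text \<open>Two chains with the same code and the same first letters consist of the same words:
  by strong induction on the position, a letter of y_j is either a letter of the common
  prefix or a letter of y_(j+1) at a smaller position.\<close>
lemma chains_agree_if_first_letters_agree:
  assumes ch: "factor_chain z d y" and ch': "factor_chain z' d y'"
    and first: "\<And>j. y j 0 = y' j 0"
  shows "y j n = y' j n"
proof (induction n arbitrary: j rule: less_induct)
  case (less n)
  let ?p = "pref (d j)"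
  have yj: "y j n = prepend ?p (mu (y (Suc j))) n" and yj': "y' j n = prepend ?p (mu (y' (Suc j))) n"
    using chain_step(3)[OF ch, of j] chain_step(3)[OF ch', of j] by simp_all
  consider "n = 0" | "0 < n" "n < length ?p" | "0 < n" "length ?p \<le> n" by linarith
  then show ?case
  proof cases
    case 1
    then show ?thesis using first by simp
  next
    case 2
    then show ?thesis unfolding yj yj' by (simp add: prepend_lt)
  next
    case 3
    then have "(n - length ?p) div 2 < n" by simp
    then have "y (Suc j) ((n - length ?p) div 2) = y' (Suc j) ((n - length ?p) div 2)"
      by (rule less.IH)
    then show ?thesis unfolding yj yj' using 3 by (simp add: prepend_def mu_def)
  qed
qed

text \<open>Hence only finitely many (at most two) words have a given purely periodic code.\<close>
lemma finite_words_with_periodic_code: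
  assumes P: "P > 0" and per: "\<And>n. d (n + P) = d n"
  shows "finite {z. \<exists>y. factor_chain z d y}"
proof -
  let ?T = "{z. \<exists>y. factor_chain z d y}"
  have "inj_on (\<lambda>z. z 0) ?T"
  proof (rule inj_onI)
    fix z z' assume "z \<in> ?T" "z' \<in> ?T" "z 0 = z' 0"
    then obtain y y' where ch: "factor_chain z d y" and ch': "factor_chain z' d y'" by blast
    have "y 0 n = y' 0 n" for n
      using chains_agree_if_first_letters_agree[OF ch ch'
          chain_first_letters_agree[OF ch ch' P per \<open>z 0 = z' 0\<close>]] .
    then show "z = z'" using chain_start[OF ch] chain_start[OF ch'] by auto
  qed
  moreover have "finite ((\<lambda>z. z 0) ` ?T)" by simp
  ultimately show ?thesis using finite_imageD by blast
qed

text \<open>If the code is periodic from N on with period P, every y_j with j \<ge> N is a word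
  whose code is one of the P purely periodic shifts of the code.\<close>
lemma chain_range_finite_if_periodic:
  assumes ch: "factor_chain x c y" and up: "ultimately_periodic c"
  shows "finite (range y)"
proof -
  obtain N P where P: "P > 0" and per: "\<And>n. N \<le> n \<Longrightarrow> c (n + P) = c n"
    using up unfolding ultimately_periodic_def by blast
  define d where "d r n = c (N + r + n)" for r n
  define T where "T r = {z. \<exists>y. factor_chain z (d r) y}" for r
  have finite_T: "finite (T r)" for r
    unfolding T_def
  proof (rule finite_words_with_periodic_code[OF P])
    show "d r (n + P) = d r n" for n unfolding d_def using per[of "N + r + n"] by (simp add: add.assoc)
  qed
  have y_T: "y j \<in> T ((j - N) mod P)" if "N \<le> j" for j
  proof -
    define r where "r = (j - N) mod P"
    define t where "t = (j - N) div P"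
    have "c (j + n) = d r n" for n
    proof -
      have jn: "j + n = (N + r + n) + t * P" unfolding r_def t_def using that by simp
      show ?thesis unfolding d_def jn using periodic_multiple[of N c P "N + r + n" t] per by simp
    qed
    then show ?thesis using chain_shift[OF ch, of j] unfolding T_def r_def by auto
  qed
  have "range y \<subseteq> y ` {..<N} \<union> (\<Union>r<P. T r)"
  proof
    fix z assume "z \<in> range y"
    then obtain j where z: "z = y j" by blast
    show "z \<in> y ` {..<N} \<union> (\<Union>r<P. T r)"
    proof (cases "j < N")
      case True
      then show ?thesis unfolding z by blast
    next
      case False
      then have "y j \<in> T ((j - N) mod P)" by (intro y_T) simp
      moreover have "(j - N) mod P < P" using P by simp
      ultimately show ?thesis unfolding z by blast
    qed
  qed
  moreover have "finite (y ` {..<N} \<union> (\<Union>r<P. T r))" using finite_T by simp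
  ultimately show ?thesis by (rule finite_subset)
qed

section \<open>From a finite chain to a finite 2-kernel\<close>

definition toggle :: "bool \<Rightarrow> iword \<Rightarrow> iword" where
  "toggle b w = (\<lambda>n. w n \<noteq> b)"

definition decimate :: "nat \<Rightarrow> iword \<Rightarrow> iword" where
  "decimate b w = (\<lambda>n. w (2 * n + b))"

definition decimate_list :: "nat \<Rightarrow> bool list \<Rightarrow> bool list" where
  "decimate_list b u = map (\<lambda>n. u ! (2 * n + b)) [0..<(length u + 1 - b) div 2]"

lemma toggle_False: "toggle False w = w"
  by (simp add: toggle_def)

lemma toggle_toggle: "toggle b (toggle b' w) = toggle (b \<noteq> b') w"
  by (rule ext) (auto simp: toggle_def)

lemma toggle_prepend: "toggle b (prepend u w) = prepend (map (\<lambda>a. a \<noteq> b) u) (toggle b w)"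
  by (rule ext) (simp add: toggle_def prepend_def)

lemma toggle_mu: "toggle b (mu w) = mu (toggle b w)"
  by (rule ext) (auto simp: toggle_def mu_def)

text \<open>Decimating u mu(v) gives a shorter prefix followed by v, complemented according to
  the parity of the position where v starts to be read.\<close>
lemma decimate_prepend_mu:
  assumes b: "b < 2"
  shows "decimate b (prepend u (mu v)) = prepend (decimate_list b u) (toggle (odd (length u + b)) v)"
proof (rule ext)
  fix n
  define L where "L = (length u + 1 - b) div 2"
  have len: "length (decimate_list b u) = L" unfolding L_def decimate_list_def by simp
  show "decimate b (prepend u (mu v)) n = prepend (decimate_list b u) (toggle (odd (length u + b)) v) n"
  proof (cases "2 * n + b < length u")
    case True
    then have "n < L" unfolding L_def using b by presburger
    with True len show ?thesis
      by (simp add: decimate_def prepend_def decimate_list_def L_def)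
  next
    case False
    have "\<not> n < L" unfolding L_def using b False by presburger
    moreover have "(2 * n + b - length u) div 2 = n - L" unfolding L_def using b False by presburger
    moreover have "even (2 * n + b - length u) = even (length u + b)" using False by presburger
    ultimately show ?thesis using False len
      by (simp add: decimate_def prepend_def toggle_def mu_def)
  qed
qed

lemma kernel2_subset_closed:
  assumes "a \<in> S" and closed: "\<And>w b. w \<in> S \<Longrightarrow> b < 2 \<Longrightarrow> decimate b w \<in> S"
  shows "kernel2 a \<subseteq> S"
proof -
  have "(\<lambda>n. a (2 ^ e * n + i)) \<in> S" if "i < 2 ^ e" for e i
    using that
  proof (induction e arbitrary: i)
    case 0
    then show ?case using \<open>a \<in> S\<close> by simp
  next
    case (Suc e)
    define b where "b = i div 2 ^ e"
    define i' where "i' = i mod 2 ^ e"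
    have "b < 2" unfolding b_def using Suc.prems by (simp add: less_mult_imp_div_less)
    have "i = 2 ^ e * b + i'" unfolding b_def i'_def by simp
    then have "(\<lambda>n. a (2 ^ Suc e * n + i)) = decimate b (\<lambda>n. a (2 ^ e * n + i'))"
      by (simp add: decimate_def algebra_simps)
    moreover have "(\<lambda>n. a (2 ^ e * n + i')) \<in> S" unfolding i'_def by (rule Suc.IH) simp
    ultimately show ?case using closed \<open>b < 2\<close> by simp
  qed
  then show ?thesis unfolding kernel2_def by blast
qed

text \<open>If the chain of x takes finitely many values, the finite set of words u t(y_j) with
  |u| \<le> 3 and t an optional complementation contains x and is closed under decimation:
  decimating u t(y_j) = u t(p_(c j)) mu(t(y_(j+1))) gives a prefix of length
  \<le> (3 + 2 + 1) div 2 = 3 followed by a possibly complemented y_(j+1).\<close>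
lemma automatic_if_chain_range_finite:
  assumes ch: "factor_chain x c y" and fin: "finite (range y)"
  shows "automatic2 x"
proof -
  define U where "U = {u :: bool list. length u \<le> 3}"
  have "finite U"
    using finite_lists_length_le[of "UNIV :: bool set" 3] unfolding U_def by simp
  define S where "S = (\<lambda>(u, b, w). prepend u (toggle b w)) ` (U \<times> (UNIV :: bool set) \<times> range y)"
  have "finite S" unfolding S_def using \<open>finite U\<close> fin by simp
  have "x \<in> S"
  proof -
    have "x = prepend [] (toggle False (y 0))"
      using chain_start[OF ch] by (simp add: toggle_False prepend_Nil)
    moreover have "([], False, y 0) \<in> U \<times> (UNIV :: bool set) \<times> range y" unfolding U_def by simp
    ultimately show ?thesis unfolding S_def by force
  qed
  moreover have "decimate b w \<in> S" if "w \<in> S" and b: "b < 2" for w b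
  proof -
    obtain u f j where u: "length u \<le> 3" and w: "w = prepend u (toggle f (y j))"
      using \<open>w \<in> S\<close> unfolding S_def U_def by auto
    define v where "v = u @ map (\<lambda>a. a \<noteq> f) (pref (c j))"
    have "length v \<le> 5" unfolding v_def using u pref_length[of "c j"] by simp
    then have short: "length (decimate_list b v) \<le> 3" by (simp add: decimate_list_def)
    have "w = prepend v (mu (toggle f (y (Suc j))))"
      unfolding w v_def chain_step(3)[OF ch, of j] toggle_prepend toggle_mu prepend_prepend ..
    then have "decimate b w = prepend (decimate_list b v) (toggle (odd (length v + b) \<noteq> f) (y (Suc j)))"
      using decimate_prepend_mu[OF b] toggle_toggle by simp
    with short show ?thesis unfolding S_def U_def by force
  qed
  ultimately have "kernel2 x \<subseteq> S" by (rule kernel2_subset_closed)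
  then show ?thesis unfolding automatic2_def using \<open>finite S\<close> by (rule finite_subset)
qed

theorem theorem7:
  fixes x :: iword
  assumes "overlap_free x"
  shows "automatic2 x \<longleftrightarrow> ultimately_periodic (code x)"
proof -
  obtain y where ch: "factor_chain x (code x) y" using code_chain[OF assms] .
  show ?thesis
  proof
    assume "automatic2 x"
    then have "finite (range y)" by (rule chain_range_finite_if_automatic[OF ch])
    then show "ultimately_periodic (code x)" by (rule periodic_code_if_chain_range_finite[OF ch])
  next
    assume "ultimately_periodic (code x)"
    then have "finite (range y)" by (rule chain_range_finite_if_periodic[OF ch])
    then show "automatic2 x" by (rule automatic_if_chain_range_finite[OF ch])
  qed
qed

end
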